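(* Let $n\ge 2$, $N=n^2+1$, $m=(n-1)^2+1$, let $F,D\in\mathcal{S}^n$, $C\in\mathbb{R}^{n\times n}$, let $$L_Q=\begin{pmatrix}0&-\tfrac12\mathrm{vec}(C)^T\\ -\tfrac12\mathrm{vec}(C)& D\otimes F\end{pmatrix}\in\mathcal{S}^{N},$$ let $\hat V\in\mathbb{R}^{N\times m}$ be the matrix described in the context, let $J$ be a given set of index pairs of $N\times N$ matrices, and fix $\mu>0$. Suppose $(R^*,Z^* )$, with $R^*\in\mathcal{S}^m$, $Z^*\in\mathcal{S}^N$, is the unique solution of the system $$(-\hat V^TZ\hat V)R=\mu I,\quad \mathcal{G}_J(\hat VR\hat V^T)=E_{00},\quad -(L_Q+Z)\in\mathcal{S}^{N}_J,\quad R\succeq O,\quad -\hat V^TZ\hat V\succeq O.$$ Let $Y^*=\hat VR^*\hat V^T$. Then $$\max_{Z\in\mathcal{S}^N}L_0^{\rm BQAP}(R^*,Y^*,Z)=L_0^{\rm BQAP}(R^*,Y^*,Z^* )=\min_{R\succ O,\;Y\in\mathcal{S}^N}L_0^{\rm BQAP}(R,Y,Z^* ),$$ i.e. $(R^*,Y^*,Z^* )$ is a saddle point of $L_0^{\rm BQAP}$.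
   Context: $\mathcal{S}^k$ is the space of real symmetric $k\times k$ matrices, $\langle A,B\rangle=\mathrm{Tr}(A^TB)$, $\succeq$ / $\succ$ denote positive semidefinite / definite, $\mathrm{vec}(C)$ stacks the columns of $C$, and $\otimes$ is the Kronecker product. $\hat V$ is the column-normalized version of $\bar V=\begin{pmatrix}1&0^T\\ \frac1n(e\otimes e)&V\otimes V\end{pmatrix}$, $V=\begin{pmatrix}I_{n-1}\\ -e^T\end{pmatrix}$, $e$ the all-ones vector, so that $\hat V^T\hat V=I$. The gangster operator $\mathcal{G}_J:\mathcal{S}^N\to\mathcal{S}^N$ is $(\mathcal{G}_J(Y))_{ij}=Y_{ij}$ if $(i,j)\in J$ or $(j,i)\in J$, and $0$ otherwise; $\mathcal{S}^N_J=\{X\in\mathcal{S}^N:\mathcal{G}_J(X)=X\}$. $E_{00}\in\mathcal{S}^N$ is the matrix whose $(1,1)$ entry is $1$ and all others $0$. $\mathcal{I}(Y)=0$ if $\mathcal{G}_J(Y)=E_{00}$ and $+\infty$ otherwise. The unaugmented Lagrangian is, for $R\succ O$, $Y,Z\in\mathcal{S}^N$, $$L_0^{\rm BQAP}(R,Y,Z)=\langle L_Q,Y\rangle-\mu\log(\det R)+\mathcal{I}(Y)+\langle Z,\,Y-\hat VR\hat V^T\rangle.$$ *)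

theory Defs
  imports Complex_Main "HOL-Library.Extended_Real" "Jordan_Normal_Form.Determinant"
begin

(* Matrices are Jordan_Normal_Form matrices with 0-based indices. *)

definition mtrace :: "real mat \<Rightarrow> real" where
  "mtrace A = (\<Sum>i<dim_row A. A $$ (i,i))"

definition minner :: "real mat \<Rightarrow> real mat \<Rightarrow> real" where
  "minner A B = mtrace (transpose_mat A * B)"

definition SymM :: "nat \<Rightarrow> real mat set" where
  "SymM k = {A. A \<in> carrier_mat k k \<and> transpose_mat A = A}"

definition psd :: "nat \<Rightarrow> real mat \<Rightarrow> bool" where
  "psd k A \<longleftrightarrow> A \<in> carrier_mat k k \<and> (\<forall>x\<in>carrier_vec k. 0 \<le> x \<bullet> (A *\<^sub>v x))"

definition pd :: "nat \<Rightarrow> real mat \<Rightarrow> bool" where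
  "pd k A \<longleftrightarrow> A \<in> carrier_mat k k \<and> (\<forall>x\<in>carrier_vec k. x \<noteq> 0\<^sub>v k \<longrightarrow> 0 < x \<bullet> (A *\<^sub>v x))"

definition mvec :: "real mat \<Rightarrow> real vec" where
  "mvec C = vec (dim_row C * dim_col C) (\<lambda>k. C $$ (k mod dim_row C, k div dim_row C))"

definition kron :: "real mat \<Rightarrow> real mat \<Rightarrow> real mat" where
  "kron A B = mat (dim_row A * dim_row B) (dim_col A * dim_col B)
     (\<lambda>(i,j). A $$ (i div dim_row B, j div dim_col B) * B $$ (i mod dim_row B, j mod dim_col B))"

definition LQ :: "nat \<Rightarrow> real mat \<Rightarrow> real mat \<Rightarrow> real mat \<Rightarrow> real mat" where
  "LQ n C D F = mat (n^2+1) (n^2+1) (\<lambda>(i,j).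
     if i = 0 \<and> j = 0 then 0
     else if i = 0 then - (1/2) * mvec C $ (j - 1)
     else if j = 0 then - (1/2) * mvec C $ (i - 1)
     else kron D F $$ (i - 1, j - 1))"

definition Vmat :: "nat \<Rightarrow> real mat" where
  "Vmat n = mat n (n - 1) (\<lambda>(i,j). if i < n - 1 then (if i = j then 1 else 0) else -1)"

definition Vbar :: "nat \<Rightarrow> real mat" where
  "Vbar n = mat (n^2+1) ((n-1)^2+1) (\<lambda>(i,j).
     if i = 0 then (if j = 0 then 1 else 0)
     else if j = 0 then 1 / real n
     else kron (Vmat n) (Vmat n) $$ (i - 1, j - 1))"

definition Vhat :: "nat \<Rightarrow> real mat" where
  "Vhat n = mat (n^2+1) ((n-1)^2+1) (\<lambda>(i,j).
     Vbar n $$ (i,j) / sqrt (\<Sum>k<n^2+1. (Vbar n $$ (k,j))^2))"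

definition gangster :: "(nat \<times> nat) set \<Rightarrow> real mat \<Rightarrow> real mat" where
  "gangster J Y = mat (dim_row Y) (dim_col Y)
     (\<lambda>(i,j). if (i,j) \<in> J \<or> (j,i) \<in> J then Y $$ (i,j) else 0)"

definition SymJ :: "nat \<Rightarrow> (nat \<times> nat) set \<Rightarrow> real mat set" where
  "SymJ k J = {X \<in> SymM k. gangster J X = X}"

definition E00 :: "nat \<Rightarrow> real mat" where
  "E00 k = mat k k (\<lambda>(i,j). if i = 0 \<and> j = 0 then 1 else 0)"

definition indI :: "(nat \<times> nat) set \<Rightarrow> nat \<Rightarrow> real mat \<Rightarrow> ereal" where
  "indI J k Y = (if gangster J Y = E00 k then 0 else \<infinity>)"

(* unaugmented Lagrangian L_0^{BQAP}(R,Y,Z) (meaningful for R \<succ> O) *)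
definition L0 :: "nat \<Rightarrow> real mat \<Rightarrow> real mat \<Rightarrow> real mat \<Rightarrow> (nat \<times> nat) set \<Rightarrow> real
                   \<Rightarrow> real mat \<Rightarrow> real mat \<Rightarrow> real mat \<Rightarrow> ereal" where
  "L0 n C D F J \<mu> R Y Z =
     ereal (minner (LQ n C D F) Y - \<mu> * ln (det R)
            + minner Z (Y - Vhat n * R * transpose_mat (Vhat n)))
     + indI J (n^2+1) Y"

definition KKT :: "nat \<Rightarrow> real mat \<Rightarrow> real mat \<Rightarrow> real mat \<Rightarrow> (nat \<times> nat) set \<Rightarrow> real
                   \<Rightarrow> real mat \<Rightarrow> real mat \<Rightarrow> bool" where
  "KKT n C D F J \<mu> R Z \<longleftrightarrow>
     (- (transpose_mat (Vhat n) * Z * Vhat n)) * R = \<mu> \<cdot>\<^sub>m 1\<^sub>m ((n-1)^2+1)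
   \<and> gangster J (Vhat n * R * transpose_mat (Vhat n)) = E00 (n^2+1)
   \<and> - (LQ n C D F + Z) \<in> SymJ (n^2+1) J
   \<and> psd ((n-1)^2+1) R
   \<and> psd ((n-1)^2+1) (- (transpose_mat (Vhat n) * Z * Vhat n))"

end

theory Submission
  imports Defs "Jordan_Normal_Form.Schur_Decomposition"
begin

(* Let V = Vhat n and W = - V^T Zs V.  Dual feasibility -(L_Q + Zs) in S_J makes <L_Q + Zs, Y>
   depend only on G_J(Y), so on the set G_J(Y) = E00 the Lagrangian L_0(R, Y, Zs) is a constant
   plus tr(W R) - mu ln det R, and it is +infinity elsewhere.  The equation W Rs = mu I together
   with Rs, W psd forces both to be positive definite.  For positive definite R the eigenvalues of
   W R are positive reals (Schur decomposition over C), and summing ln x <= ln mu + x/mu - 1 over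
   them gives tr(W R) - mu ln det R >= tr(W Rs) - mu ln det Rs.  The maximum over Z is trivial
   since Ys = V Rs V^T annihilates the Z-term. *)

section \<open>Traces\<close>

(* mtrace is restricted to real matrices; the eigenvalue argument takes traces over C. *)
definition mat_trace :: "'a::comm_ring_1 mat \<Rightarrow> 'a" where
  "mat_trace A = (\<Sum>i<dim_row A. A $$ (i,i))"

lemma mtrace_eq_mat_trace: "mtrace A = mat_trace A"
  unfolding mtrace_def mat_trace_def ..

lemma mat_trace_mult_comm:
  assumes A: "A \<in> carrier_mat n k" and B: "B \<in> carrier_mat k n"
  shows "mat_trace (A * B) = mat_trace (B * A)"
proof -
  have "mat_trace (A * B) = (\<Sum>i<n. \<Sum>j<k. A $$ (i,j) * B $$ (j,i))"
    unfolding mat_trace_def using A B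
    by (intro sum.cong refl) (auto simp: scalar_prod_def atLeast0LessThan)
  also have "\<dots> = (\<Sum>j<k. \<Sum>i<n. A $$ (i,j) * B $$ (j,i))" by (rule sum.swap)
  also have "\<dots> = mat_trace (B * A)"
    unfolding mat_trace_def using A B
    by (intro sum.cong refl) (auto simp: scalar_prod_def atLeast0LessThan mult.commute)
  finally show ?thesis .
qed

lemma mat_trace_uminus:
  assumes "A \<in> carrier_mat n n"
  shows "mat_trace (- A) = - mat_trace A"
  unfolding mat_trace_def using assms by (simp add: sum_negf)

lemma mat_trace_of_real:
  assumes "A \<in> carrier_mat n n"
  shows "mat_trace (map_mat complex_of_real A) = complex_of_real (mat_trace A)"
  unfolding mat_trace_def using assms by auto

lemma mat_trace_smult_one: "mat_trace (c \<cdot>\<^sub>m 1\<^sub>m m) = c * of_nat m"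
  unfolding mat_trace_def by simp

lemma complex_det_trace_eigenvalues:
  fixes A :: "complex mat"
  assumes A: "A \<in> carrier_mat n n"
  obtains cs where "length cs = n" "\<And>c. c \<in> set cs \<Longrightarrow> eigenvalue A c"
    "det A = prod_list cs" "mat_trace A = sum_list cs"
proof -
  obtain cs where cp: "char_poly A = (\<Prod>a\<leftarrow>cs. [:- a, 1:])" and len: "length cs = n"
    using char_poly_factorized[OF A] by blast
  obtain B P Q where "schur_decomposition A cs = (B, P, Q)" by (metis prod_cases3)
  from schur_decomposition[OF A cp this]
  have sim: "similar_mat_wit A B P Q" and ut: "upper_triangular B" and diag: "diag_mat B = cs"
    by auto
  from sim A have B: "B \<in> carrier_mat n n" and P: "P \<in> carrier_mat n n"
    and Q: "Q \<in> carrier_mat n n" and QP: "Q * P = 1\<^sub>m n" and APBQ: "A = P * B * Q"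
    unfolding similar_mat_wit_def Let_def by auto
  have "det A = det B"
    using det_similar[of A B] sim A unfolding similar_mat_def by blast
  also have "\<dots> = prod_list cs" using det_upper_triangular[OF ut B] diag by simp
  finally have det: "det A = prod_list cs" .
  have "mat_trace A = mat_trace (P * (B * Q))" unfolding APBQ using assoc_mult_mat[OF P B Q] by simp
  also have "\<dots> = mat_trace (B * Q * P)" using P B Q by (intro mat_trace_mult_comm) auto
  also have "\<dots> = mat_trace B" using assoc_mult_mat[OF B Q P] QP B by simp
  also have "\<dots> = sum_list cs"
    unfolding diag[symmetric] diag_mat_def mat_trace_def
    by (simp add: sum_list_sum_nth atLeast0LessThan)
  finally have trace: "mat_trace A = sum_list cs" .
  have "eigenvalue A c" if "c \<in> set cs" for c
  proof -
    have "poly (char_poly A) c = 0" unfolding cp using that by (induct cs) auto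
    thus ?thesis using eigenvalue_root_char_poly[OF A] by simp
  qed
  with len det trace that show ?thesis by blast
qed

section \<open>Quadratic forms and definiteness\<close>

lemma symmetric_mat_entry:
  assumes "M \<in> carrier_mat m m" "transpose_mat M = M" "i < m" "j < m"
  shows "M $$ (j,i) = M $$ (i,j)"
  using assms by (metis carrier_matD index_transpose_mat(1))

lemma scalar_prod_mult_mat_vec_sum:
  assumes M: "M \<in> carrier_mat m m" and x: "x \<in> carrier_vec m" and y: "y \<in> carrier_vec m"
  shows "x \<bullet> (M *\<^sub>v y) = (\<Sum>i<m. \<Sum>j<m. x $ i * M $$ (i,j) * y $ j)"
  using M x y by (simp add: scalar_prod_def atLeast0LessThan sum_distrib_left mult.assoc)

lemma symmetric_scalar_prod_mult_mat_vec:
  fixes M :: "'a::comm_ring_1 mat"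
  assumes M: "M \<in> carrier_mat m m" and sym: "transpose_mat M = M"
    and x: "x \<in> carrier_vec m" and y: "y \<in> carrier_vec m"
  shows "x \<bullet> (M *\<^sub>v y) = y \<bullet> (M *\<^sub>v x)"
proof -
  have "(\<Sum>i<m. \<Sum>j<m. x $ i * M $$ (i,j) * y $ j) = (\<Sum>j<m. \<Sum>i<m. x $ i * M $$ (i,j) * y $ j)"
    by (rule sum.swap)
  also have "\<dots> = (\<Sum>i<m. \<Sum>j<m. y $ i * M $$ (i,j) * x $ j)"
    using symmetric_mat_entry[OF M sym] by (intro sum.cong refl) (simp add: ac_simps)
  finally show ?thesis
    using M x y by (simp add: scalar_prod_mult_mat_vec_sum)
qed

lemma smult_one_mult_mat_vec:
  assumes "x \<in> carrier_vec m"
  shows "(c \<cdot>\<^sub>m 1\<^sub>m m) *\<^sub>v x = c \<cdot>\<^sub>v (x :: 'a::comm_ring_1 vec)"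
  using assms by (intro eq_vecI) (auto simp: row_smult smult_scalar_prod_distrib)

lemma pd_quad_form_nonneg:
  assumes "pd m M" "x \<in> carrier_vec m"
  shows "0 \<le> x \<bullet> (M *\<^sub>v x)"
  using assms unfolding pd_def by (cases "x = 0\<^sub>v m") (auto intro: less_imp_le)

lemma psd_quad_form_eq_0_imp_kernel:
  fixes M :: "real mat"
  assumes M: "M \<in> carrier_mat m m" and sym: "transpose_mat M = M" and psd: "psd m M"
    and x: "x \<in> carrier_vec m" and x0: "x \<bullet> (M *\<^sub>v x) = 0"
  shows "M *\<^sub>v x = 0\<^sub>v m"
proof -
  define y where "y = M *\<^sub>v x"
  have y: "y \<in> carrier_vec m" unfolding y_def using M x by simp
  define a where "a = y \<bullet> y"
  define b where "b = y \<bullet> (M *\<^sub>v y)"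
  have b0: "b \<ge> 0" using psd y unfolding psd_def b_def by blast
  have quad: "0 \<le> 2 * s * a + s\<^sup>2 * b" for s
  proof -
    have "0 \<le> (x + s \<cdot>\<^sub>v y) \<bullet> (M *\<^sub>v (x + s \<cdot>\<^sub>v y))"
      using psd x y unfolding psd_def by simp
    also have "\<dots> = x \<bullet> (M *\<^sub>v x) + s * (x \<bullet> (M *\<^sub>v y)) + s * (y \<bullet> (M *\<^sub>v x)) + s\<^sup>2 * b"
      using M x y unfolding b_def
      by (simp add: mult_add_distrib_mat_vec mult_mat_vec add_scalar_prod_distrib
          scalar_prod_add_distrib power2_eq_square algebra_simps)
    also have "\<dots> = 2 * s * a + s\<^sup>2 * b"
      using x0 symmetric_scalar_prod_mult_mat_vec[OF M sym x y] unfolding a_def y_def by simp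
    finally show ?thesis .
  qed
  have "a = 0"
  proof (rule ccontr)
    assume "a \<noteq> 0"
    hence ap: "a > 0" using conjugate_square_ge_0_vec[of y] unfolding a_def by simp
    define t where "t = a / (b + 1)"
    have "t > 0" "t * b < a" unfolding t_def using ap b0 by (auto simp: field_simps)
    hence "2 * (-t) * a + (-t)\<^sup>2 * b < 0" using ap
      by (simp add: power2_eq_square algebra_simps mult_pos_neg)
    with quad[of "-t"] show False by simp
  qed
  thus ?thesis using conjugate_square_eq_0_vec[OF y] unfolding a_def y_def by simp
qed

lemma psd_left_invertible_imp_pd:
  fixes M X :: "real mat"
  assumes M: "M \<in> carrier_mat m m" and sym: "transpose_mat M = M" and psd: "psd m M"
    and X: "X \<in> carrier_mat m m" and XM: "X * M = c \<cdot>\<^sub>m 1\<^sub>m m" and c: "c \<noteq> 0"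
  shows "pd m M"
  unfolding pd_def
proof (intro conjI ballI impI)
  fix x :: "real vec"
  assume x: "x \<in> carrier_vec m" and x0: "x \<noteq> 0\<^sub>v m"
  show "0 < x \<bullet> (M *\<^sub>v x)"
  proof (rule ccontr)
    assume "\<not> 0 < x \<bullet> (M *\<^sub>v x)"
    hence "x \<bullet> (M *\<^sub>v x) = 0" using psd x unfolding psd_def by force
    hence "M *\<^sub>v x = 0\<^sub>v m" by (rule psd_quad_form_eq_0_imp_kernel[OF M sym psd x])
    hence "(X * M) *\<^sub>v x = 0\<^sub>v m" using X M x by (auto simp: assoc_mult_mat_vec)
    hence "c \<cdot>\<^sub>v x = 0\<^sub>v m" unfolding XM smult_one_mult_mat_vec[OF x] .
    hence "x = 0\<^sub>v m"
      using c x by (intro eq_vecI) (auto dest!: vec_eq_iff[THEN iffD1])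
    with x0 show False ..
  qed
qed (rule M)

lemma pd_one_mat: "pd m (1\<^sub>m m)"
  unfolding pd_def using conjugate_square_greater_0_vec[where 'a = real] by auto

section \<open>Products of positive definite matrices\<close>

definition hermitian_form :: "nat \<Rightarrow> complex mat \<Rightarrow> complex vec \<Rightarrow> complex" where
  "hermitian_form m M x = (\<Sum>i<m. \<Sum>j<m. cnj (x $ i) * M $$ (i,j) * x $ j)"

lemma hermitian_form_mult_mat_vec:
  assumes "M \<in> carrier_mat m m" "x \<in> carrier_vec m"
  shows "hermitian_form m M x = (\<Sum>i<m. cnj (x $ i) * (M *\<^sub>v x) $ i)"
  unfolding hermitian_form_def using assms
  by (simp add: scalar_prod_def atLeast0LessThan sum_distrib_left mult.assoc)

lemma pd_hermitian_form_pos: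
  fixes M :: "real mat"
  assumes M: "M \<in> carrier_mat m m" and sym: "transpose_mat M = M" and pd: "pd m M"
    and x: "x \<in> carrier_vec m" and x0: "x \<noteq> 0\<^sub>v m"
  obtains p where "p > 0" "hermitian_form m (map_mat complex_of_real M) x = complex_of_real p"
proof -
  define a where "a = vec m (\<lambda>i. Re (x $ i))"
  define b where "b = vec m (\<lambda>i. Im (x $ i))"
  have a: "a \<in> carrier_vec m" and b: "b \<in> carrier_vec m" unfolding a_def b_def by auto
  have form: "hermitian_form m (map_mat complex_of_real M) x
      = complex_of_real (a \<bullet> (M *\<^sub>v a) + b \<bullet> (M *\<^sub>v b))"
  proof (rule complex_eqI)
    show "Re (hermitian_form m (map_mat complex_of_real M) x)
        = Re (complex_of_real (a \<bullet> (M *\<^sub>v a) + b \<bullet> (M *\<^sub>v b)))"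
      unfolding hermitian_form_def scalar_prod_mult_mat_vec_sum[OF M a a]
        scalar_prod_mult_mat_vec_sum[OF M b b] using M
      by (simp add: a_def b_def sum.distrib algebra_simps)
    have "Im (hermitian_form m (map_mat complex_of_real M) x) = a \<bullet> (M *\<^sub>v b) - b \<bullet> (M *\<^sub>v a)"
      unfolding hermitian_form_def scalar_prod_mult_mat_vec_sum[OF M a b]
        scalar_prod_mult_mat_vec_sum[OF M b a] using M
      by (simp add: a_def b_def sum_subtractf algebra_simps)
    thus "Im (hermitian_form m (map_mat complex_of_real M) x)
        = Im (complex_of_real (a \<bullet> (M *\<^sub>v a) + b \<bullet> (M *\<^sub>v b)))"
      using symmetric_scalar_prod_mult_mat_vec[OF M sym a b] by simp
  qed
  have "a \<noteq> 0\<^sub>v m \<or> b \<noteq> 0\<^sub>v m"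
  proof (rule ccontr)
    assume "\<not> ?thesis"
    hence "x = 0\<^sub>v m"
      using x by (intro eq_vecI) (auto simp: a_def b_def complex_eq_iff dest!: vec_eq_iff[THEN iffD1])
    with x0 show False ..
  qed
  hence "0 < a \<bullet> (M *\<^sub>v a) + b \<bullet> (M *\<^sub>v b)"
    using pd a b pd_quad_form_nonneg[OF pd a] pd_quad_form_nonneg[OF pd b]
    unfolding pd_def by (auto intro: add_pos_nonneg add_nonneg_pos)
  with form that show ?thesis by blast
qed

lemma pd_mult_eigenvalue_pos_real:
  fixes W R :: "real mat"
  assumes W: "W \<in> carrier_mat m m" and R: "R \<in> carrier_mat m m"
    and sW: "transpose_mat W = W" and sR: "transpose_mat R = R"
    and pW: "pd m W" and pR: "pd m R"
    and ev: "eigenvalue (map_mat complex_of_real (W * R)) c"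
  obtains r where "r > 0" "c = complex_of_real r"
proof -
  define Wc where "Wc = map_mat complex_of_real W"
  define Rc where "Rc = map_mat complex_of_real R"
  have Wc: "Wc \<in> carrier_mat m m" and Rc: "Rc \<in> carrier_mat m m"
    using W R unfolding Wc_def Rc_def by auto
  have "map_mat complex_of_real (W * R) = Wc * Rc"
    unfolding Wc_def Rc_def by (rule of_real_hom.mat_hom_mult[OF W R])
  with ev Wc obtain v where v: "v \<in> carrier_vec m" and v0: "v \<noteq> 0\<^sub>v m"
    and Av: "(Wc * Rc) *\<^sub>v v = c \<cdot>\<^sub>v v"
    unfolding eigenvalue_def eigenvector_def by auto
  define u where "u = Rc *\<^sub>v v"
  have u: "u \<in> carrier_vec m" unfolding u_def using Rc v by simp
  have Wu: "Wc *\<^sub>v u = c \<cdot>\<^sub>v v"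
    unfolding u_def assoc_mult_mat_vec[OF Wc Rc v, symmetric] by (rule Av)
  (* For u = R v both u* W u = c (u* v) and u* v = v* R v are positive reals. *)
  define S where "S = (\<Sum>i<m. cnj (u $ i) * v $ i)"
  have hW: "hermitian_form m Wc u = c * S"
    unfolding hermitian_form_mult_mat_vec[OF Wc u] Wu S_def using v
    by (simp add: sum_distrib_left algebra_simps)
  have hR: "S = hermitian_form m Rc v"
  proof -
    have "S = (\<Sum>i<m. \<Sum>j<m. complex_of_real (R $$ (i,j)) * cnj (v $ j) * v $ i)"
      unfolding S_def u_def using Rc R v
      by (simp add: scalar_prod_def atLeast0LessThan Rc_def sum_distrib_right)
    also have "\<dots> = (\<Sum>j<m. \<Sum>i<m. complex_of_real (R $$ (i,j)) * cnj (v $ j) * v $ i)"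
      by (rule sum.swap)
    also have "\<dots> = hermitian_form m Rc v"
      unfolding hermitian_form_def using R symmetric_mat_entry[OF R sR]
      by (intro sum.cong refl) (simp add: Rc_def mult.commute mult.left_commute)
    finally show ?thesis .
  qed
  obtain p where p: "p > 0" "hermitian_form m Rc v = complex_of_real p"
    using pd_hermitian_form_pos[OF R sR pR v v0] unfolding Rc_def by blast
  have "u \<noteq> 0\<^sub>v m"
  proof
    assume "u = 0\<^sub>v m"
    hence "S = 0" unfolding S_def by simp
    with hR p show False by simp
  qed
  then obtain q where q: "q > 0" "hermitian_form m Wc u = complex_of_real q"
    using pd_hermitian_form_pos[OF W sW pW u] unfolding Wc_def by blast
  have "complex_of_real q = c * complex_of_real p"
    using hW unfolding q(2) hR p(2) .
  hence "c = complex_of_real q / complex_of_real p" using p(1) by (simp add: eq_divide_eq)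
  with p q show ?thesis by (intro that[of "q / p"]) simp_all
qed

lemma pd_mult_det_trace_eigenvalues:
  fixes W R :: "real mat"
  assumes W: "W \<in> carrier_mat m m" and R: "R \<in> carrier_mat m m"
    and sW: "transpose_mat W = W" and sR: "transpose_mat R = R"
    and pW: "pd m W" and pR: "pd m R"
  obtains es where "length es = m" "\<And>e. e \<in> set es \<Longrightarrow> e > 0"
    "det (W * R) = prod_list es" "mtrace (W * R) = sum_list es"
proof -
  have WR: "W * R \<in> carrier_mat m m" using W R by simp
  obtain cs where len: "length cs = m"
    and ev: "\<And>c. c \<in> set cs \<Longrightarrow> eigenvalue (map_mat complex_of_real (W * R)) c"
    and det: "det (map_mat complex_of_real (W * R)) = prod_list cs"
    and trace: "mat_trace (map_mat complex_of_real (W * R)) = sum_list cs"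
    using complex_det_trace_eigenvalues[of "map_mat complex_of_real (W * R)" m] WR by auto
  have real: "complex_of_real (Re c) = c" "Re c > 0" if c: "c \<in> set cs" for c
  proof -
    obtain r where "r > 0" "c = complex_of_real r"
      using pd_mult_eigenvalue_pos_real[OF W R sW sR pW pR ev[OF c]] .
    thus "complex_of_real (Re c) = c" "Re c > 0" by simp_all
  qed
  define es where "es = map Re cs"
  have "cs = map complex_of_real es"
    unfolding es_def map_map o_def using real(1) by (simp add: map_idI)
  hence "complex_of_real (det (W * R)) = complex_of_real (prod_list es)"
    and "complex_of_real (mtrace (W * R)) = complex_of_real (sum_list es)"
    using det trace unfolding of_real_hom.hom_det mtrace_eq_mat_trace mat_trace_of_real[OF WR]
      of_real_hom.hom_prod_list of_real_hom.hom_sum_list by simp_all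
  moreover have "length es = m" "\<And>e. e \<in> set es \<Longrightarrow> e > 0"
    using len real(2) unfolding es_def by auto
  ultimately show ?thesis using that unfolding of_real_eq_iff by blast
qed

lemma pd_det_pos:
  assumes R: "R \<in> carrier_mat m m" and "transpose_mat R = R" "pd m R"
  shows "det R > 0"
proof -
  obtain es where "\<And>e. e \<in> set es \<Longrightarrow> e > 0" "det (1\<^sub>m m * R) = prod_list es"
    using pd_mult_det_trace_eigenvalues[OF one_carrier_mat R _ assms(2) pd_one_mat assms(3)] by auto
  moreover have "prod_list es > 0" using calculation(1) by (induct es) auto
  ultimately show ?thesis using R by simp
qed

lemma ln_prod_list_le:
  assumes "\<And>e. e \<in> set es \<Longrightarrow> (e::real) > 0" and "\<mu> > 0"
  shows "ln (prod_list es) \<le> real (length es) * ln \<mu> + sum_list es / \<mu> - real (length es)"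
  using assms(1)
proof (induct es)
  case Nil
  thus ?case by simp
next
  case (Cons e es)
  have e: "e > 0" and es: "\<And>e. e \<in> set es \<Longrightarrow> e > 0" using Cons.prems by auto
  have "prod_list es > 0" using es by (induct es) auto
  hence "ln (prod_list (e # es)) = ln e + ln (prod_list es)"
    by (simp only: prod_list.Cons ln_mult_pos[OF e])
  moreover have "ln e \<le> ln \<mu> + e / \<mu> - 1"
    using ln_le_minus_one[of "e / \<mu>"] e \<open>\<mu> > 0\<close> by (simp add: ln_div)
  ultimately show ?case using Cons.hyps[OF es] by (simp add: add_divide_distrib ring_distribs)
qed

lemma trace_minus_log_det_minimal:
  fixes W R Rs :: "real mat"
  assumes W: "W \<in> carrier_mat m m" and R: "R \<in> carrier_mat m m" and Rs: "Rs \<in> carrier_mat m m"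
    and sW: "transpose_mat W = W" and sR: "transpose_mat R = R"
    and pW: "pd m W" and pR: "pd m R"
    and WRs: "W * Rs = \<mu> \<cdot>\<^sub>m 1\<^sub>m m" and \<mu>: "\<mu> > 0"
  shows "mtrace (W * Rs) - \<mu> * ln (det Rs) \<le> mtrace (W * R) - \<mu> * ln (det R)"
proof -
  obtain es where es: "length es = m" "\<And>e. e \<in> set es \<Longrightarrow> e > 0"
      "det (W * R) = prod_list es" "mtrace (W * R) = sum_list es"
    using pd_mult_det_trace_eigenvalues[OF W R sW sR pW pR] by blast
  have dW: "det W > 0" and dR: "det R > 0"
    using pd_det_pos[OF W sW pW] pd_det_pos[OF R sR pR] .
  have dWRs: "det W * det Rs = \<mu> ^ m" using det_mult[OF W Rs] WRs by simp
  hence dRs: "det Rs > 0" using dW \<mu> zero_less_mult_pos[of "det W" "det Rs"] by simp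
  have "ln (det W) + ln (det Rs) = real m * ln \<mu>"
    using arg_cong[OF dWRs, of ln] dW dRs \<mu> by (simp add: ln_mult ln_realpow)
  moreover have "ln (det W) + ln (det R) \<le> real m * ln \<mu> + mtrace (W * R) / \<mu> - real m"
  proof -
    have "ln (det W) + ln (det R) = ln (prod_list es)"
      using es(3) det_mult[OF W R] ln_mult_pos[OF dW dR] by simp
    thus ?thesis using ln_prod_list_le[of es, OF es(2) \<mu>] es(1,4) by simp
  qed
  ultimately have "\<mu> * (ln (det R) - ln (det Rs)) \<le> \<mu> * (mtrace (W * R) / \<mu> - real m)"
    using \<mu> by (intro mult_left_mono) auto
  moreover have "mtrace (W * Rs) = \<mu> * real m"
    unfolding WRs mtrace_eq_mat_trace mat_trace_smult_one by simp
  ultimately show ?thesis using \<mu> by (simp add: algebra_simps)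
qed

section \<open>The trace inner product and the gangster operator\<close>

lemma transpose_congruence_symmetric:
  fixes A B :: "'a::comm_ring_1 mat"
  assumes A: "A \<in> carrier_mat k k" and sym: "transpose_mat A = A" and B: "B \<in> carrier_mat k l"
  shows "transpose_mat (transpose_mat B * A * B) = transpose_mat B * A * B"
proof -
  have BT: "transpose_mat B \<in> carrier_mat l k" using B by simp
  have "transpose_mat (transpose_mat B * A * B) = transpose_mat B * (transpose_mat A * B)"
    using transpose_mult[OF mult_carrier_mat[OF BT A] B] transpose_mult[OF BT A] by simp
  thus ?thesis using sym assoc_mult_mat[OF BT A B] by simp
qed

lemma minner_entrywise:
  assumes "A \<in> carrier_mat k k" "B \<in> carrier_mat k k"
  shows "minner A B = (\<Sum>i<k. \<Sum>j<k. A $$ (j,i) * B $$ (j,i))"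
  unfolding minner_def mtrace_def using assms
  by (intro sum.cong) (auto simp: scalar_prod_def atLeast0LessThan)

lemma minner_add_left:
  assumes A: "A \<in> carrier_mat k k" and B: "B \<in> carrier_mat k k" and C: "C \<in> carrier_mat k k"
  shows "minner (A + B) C = minner A C + minner B C"
  unfolding minner_entrywise[OF add_carrier_mat[OF B] C] minner_entrywise[OF A C]
    minner_entrywise[OF B C]
  using A B C by (simp add: distrib_right sum.distrib)

lemma minner_diff_right:
  assumes A: "A \<in> carrier_mat k k" and B: "B \<in> carrier_mat k k" and C: "C \<in> carrier_mat k k"
  shows "minner A (B - C) = minner A B - minner A C"
  unfolding minner_entrywise[OF A minus_carrier_mat[OF C]] minner_entrywise[OF A B]
    minner_entrywise[OF A C]
  using B C by (simp add: right_diff_distrib sum_subtractf)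

lemma minner_congruence:
  fixes Z V R :: "real mat"
  assumes Z: "Z \<in> carrier_mat k k" and sym: "transpose_mat Z = Z"
    and V: "V \<in> carrier_mat k l" and R: "R \<in> carrier_mat l l"
  shows "minner Z (V * R * transpose_mat V) = mtrace (transpose_mat V * Z * V * R)"
proof -
  have VT: "transpose_mat V \<in> carrier_mat l k" using V by simp
  have "minner Z (V * R * transpose_mat V) = mat_trace ((Z * V * R) * transpose_mat V)"
    unfolding minner_def sym mtrace_eq_mat_trace
    using assoc_mult_mat[OF Z mult_carrier_mat[OF V R] VT] assoc_mult_mat[OF Z V R] by simp
  also have "\<dots> = mat_trace (transpose_mat V * (Z * V * R))"
    using Z V R by (intro mat_trace_mult_comm) auto
  also have "transpose_mat V * (Z * V * R) = transpose_mat V * Z * V * R"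
    using assoc_mult_mat[OF VT mult_carrier_mat[OF Z V] R] assoc_mult_mat[OF VT Z V] by simp
  finally show ?thesis unfolding mtrace_eq_mat_trace .
qed

lemma gangster_carrier [simp]: "gangster J Y \<in> carrier_mat (dim_row Y) (dim_col Y)"
  unfolding gangster_def by simp

lemma gangster_index:
  "i < dim_row Y \<Longrightarrow> j < dim_col Y \<Longrightarrow>
    gangster J Y $$ (i,j) = (if (i,j) \<in> J \<or> (j,i) \<in> J then Y $$ (i,j) else 0)"
  unfolding gangster_def by simp

lemma gangster_uminus_fixed:
  assumes X: "X \<in> carrier_mat k k" and fixed: "gangster J (- X) = - X"
  shows "gangster J X = X"
proof (rule eq_matI)
  fix i j
  assume "i < dim_row X" "j < dim_col X"
  hence ij: "i < k" "j < k" using X by auto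
  have "(- X) $$ (i,j) = gangster J (- X) $$ (i,j)" using fixed by simp
  hence "X $$ (i,j) = 0" if "(i,j) \<notin> J" "(j,i) \<notin> J" using that ij X by (simp add: gangster_index)
  thus "gangster J X $$ (i,j) = X $$ (i,j)" using ij X by (auto simp: gangster_index)
qed (simp_all add: gangster_def)

lemma minner_gangster_right:
  assumes K: "K \<in> carrier_mat k k" and Y: "Y \<in> carrier_mat k k" and fixed: "gangster J K = K"
  shows "minner K Y = minner K (gangster J Y)"
proof -
  have "K $$ (j,i) * Y $$ (j,i) = K $$ (j,i) * gangster J Y $$ (j,i)" if "i < k" "j < k" for i j
  proof -
    have "K $$ (j,i) = gangster J K $$ (j,i)" using fixed by simp
    hence "K $$ (j,i) = 0" if "(i,j) \<notin> J" "(j,i) \<notin> J"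
      using that \<open>i < k\<close> \<open>j < k\<close> K by (simp add: gangster_index)
    thus ?thesis using that K Y by (auto simp: gangster_index)
  qed
  moreover have "gangster J Y \<in> carrier_mat k k" using Y gangster_carrier[of J Y] by simp
  ultimately show ?thesis
    unfolding minner_entrywise[OF K Y] minner_entrywise[OF K \<open>gangster J Y \<in> carrier_mat k k\<close>]
    by (intro sum.cong refl) auto
qed

section \<open>The Lagrangian at a solution of the optimality system\<close>

lemma Vhat_carrier: "Vhat n \<in> carrier_mat (n\<^sup>2 + 1) ((n - 1)\<^sup>2 + 1)"
  unfolding Vhat_def by simp

lemma LQ_carrier: "LQ n C D F \<in> carrier_mat (n\<^sup>2 + 1) (n\<^sup>2 + 1)"
  unfolding LQ_def by simp

lemma L0_consistent_eq:
  assumes Y: "Y = Vhat n * R * transpose_mat (Vhat n)"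
    and R: "R \<in> carrier_mat ((n - 1)\<^sup>2 + 1) ((n - 1)\<^sup>2 + 1)"
    and Z: "Z \<in> carrier_mat (n\<^sup>2 + 1) (n\<^sup>2 + 1)"
  shows "L0 n C D F J \<mu> R Y Z
    = ereal (minner (LQ n C D F) Y - \<mu> * ln (det R)) + indI J (n\<^sup>2 + 1) Y"
proof -
  have "Y \<in> carrier_mat (n\<^sup>2 + 1) (n\<^sup>2 + 1)" using Y R Vhat_carrier[of n] by simp
  hence "minner Z (Y - Y) = 0" using minner_diff_right[OF Z, of Y Y] by simp
  thus ?thesis unfolding L0_def Y[symmetric] by simp
qed

lemma SUP_L0_consistent:
  assumes Y: "Y = Vhat n * R * transpose_mat (Vhat n)"
    and R: "R \<in> carrier_mat ((n - 1)\<^sup>2 + 1) ((n - 1)\<^sup>2 + 1)"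
    and Zs: "Zs \<in> SymM (n\<^sup>2 + 1)"
  shows "(SUP Z\<in>SymM (n\<^sup>2 + 1). L0 n C D F J \<mu> R Y Z) = L0 n C D F J \<mu> R Y Zs"
proof -
  have "(SUP Z\<in>SymM (n\<^sup>2 + 1). L0 n C D F J \<mu> R Y Z)
      = (SUP Z\<in>SymM (n\<^sup>2 + 1). ereal (minner (LQ n C D F) Y - \<mu> * ln (det R)) + indI J (n\<^sup>2 + 1) Y)"
    using L0_consistent_eq[OF Y R] unfolding SymM_def by (intro SUP_cong) auto
  also have "\<dots> = L0 n C D F J \<mu> R Y Zs"
    using Zs L0_consistent_eq[OF Y R] unfolding SymM_def by (subst SUP_const) auto
  finally show ?thesis .
qed

lemma L0_feasible_eq:
  fixes n :: nat and Z :: "real mat"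
  defines "V \<equiv> Vhat n"
  assumes Z: "Z \<in> SymM (n\<^sup>2 + 1)" and dual: "- (LQ n C D F + Z) \<in> SymJ (n\<^sup>2 + 1) J"
    and R: "R \<in> carrier_mat ((n - 1)\<^sup>2 + 1) ((n - 1)\<^sup>2 + 1)"
    and Y: "Y \<in> carrier_mat (n\<^sup>2 + 1) (n\<^sup>2 + 1)" and primal: "gangster J Y = E00 (n\<^sup>2 + 1)"
  shows "L0 n C D F J \<mu> R Y Z = ereal (minner (LQ n C D F + Z) (E00 (n\<^sup>2 + 1))
    + mtrace (- (transpose_mat V * Z * V) * R) - \<mu> * ln (det R))"
proof -
  have V: "V \<in> carrier_mat (n\<^sup>2 + 1) ((n - 1)\<^sup>2 + 1)" unfolding V_def by (rule Vhat_carrier)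
  have Zc: "Z \<in> carrier_mat (n\<^sup>2 + 1) (n\<^sup>2 + 1)" and sym: "transpose_mat Z = Z"
    using Z unfolding SymM_def by auto
  have K: "LQ n C D F + Z \<in> carrier_mat (n\<^sup>2 + 1) (n\<^sup>2 + 1)" using Zc by simp
  have fixed: "gangster J (LQ n C D F + Z) = LQ n C D F + Z"
    using gangster_uminus_fixed[OF K] dual unfolding SymJ_def by auto
  have VRV: "V * R * transpose_mat V \<in> carrier_mat (n\<^sup>2 + 1) (n\<^sup>2 + 1)" using V R by simp
  have VZV: "transpose_mat V * Z * V \<in> carrier_mat ((n - 1)\<^sup>2 + 1) ((n - 1)\<^sup>2 + 1)"
    using mult_carrier_mat[OF mult_carrier_mat[OF transpose_carrier_mat[THEN iffD2, OF V] Zc] V] .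
  have neg: "mtrace (- (transpose_mat V * Z * V) * R) = - mtrace (transpose_mat V * Z * V * R)"
  proof -
    have "- (transpose_mat V * Z * V) * R = - (transpose_mat V * Z * V * R)"
      using VZV R by (intro uminus_mult_left_mat) auto
    thus ?thesis using mat_trace_uminus[OF mult_carrier_mat[OF VZV R]]
      unfolding mtrace_eq_mat_trace by simp
  qed
  have "minner (LQ n C D F) Y + minner Z (Y - V * R * transpose_mat V)
      = minner (LQ n C D F + Z) Y - minner Z (V * R * transpose_mat V)"
    using minner_add_left[OF LQ_carrier Zc Y] minner_diff_right[OF Zc Y VRV] by simp
  also have "\<dots> = minner (LQ n C D F + Z) (E00 (n\<^sup>2 + 1)) + mtrace (- (transpose_mat V * Z * V) * R)"
    using minner_gangster_right[OF K Y fixed] minner_congruence[OF Zc sym V R] neg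
    unfolding primal by simp
  finally show ?thesis
    using primal unfolding L0_def indI_def V_def by (simp add: algebra_simps)
qed

lemma KKT_imp_pd:
  fixes n :: nat and Z :: "real mat"
  defines "W \<equiv> - (transpose_mat (Vhat n) * Z * Vhat n)"
  assumes KKT: "KKT n C D F J \<mu> R Z" and R: "R \<in> SymM ((n - 1)\<^sup>2 + 1)"
    and Z: "Z \<in> SymM (n\<^sup>2 + 1)" and \<mu>: "\<mu> > 0"
  shows "pd ((n - 1)\<^sup>2 + 1) R" "pd ((n - 1)\<^sup>2 + 1) W"
proof -
  have Rc: "R \<in> carrier_mat ((n - 1)\<^sup>2 + 1) ((n - 1)\<^sup>2 + 1)" and sR: "transpose_mat R = R"
    using R unfolding SymM_def by auto
  have Zc: "Z \<in> carrier_mat (n\<^sup>2 + 1) (n\<^sup>2 + 1)" and sZ: "transpose_mat Z = Z"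
    using Z unfolding SymM_def by auto
  have W: "W \<in> carrier_mat ((n - 1)\<^sup>2 + 1) ((n - 1)\<^sup>2 + 1)"
    unfolding W_def using Vhat_carrier[of n] Zc by simp
  have sW: "transpose_mat W = W"
    unfolding W_def transpose_uminus
    using transpose_congruence_symmetric[OF Zc sZ Vhat_carrier] by simp
  have WR: "W * R = \<mu> \<cdot>\<^sub>m 1\<^sub>m ((n - 1)\<^sup>2 + 1)" and psdR: "psd ((n - 1)\<^sup>2 + 1) R"
    and psdW: "psd ((n - 1)\<^sup>2 + 1) W"
    using KKT unfolding KKT_def W_def by auto
  have "R * W = transpose_mat (W * R)" using transpose_mult[OF W Rc] sW sR by simp
  hence RW: "R * W = \<mu> \<cdot>\<^sub>m 1\<^sub>m ((n - 1)\<^sup>2 + 1)" unfolding WR by (auto intro: eq_matI)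
  show "pd ((n - 1)\<^sup>2 + 1) R" using psd_left_invertible_imp_pd[OF Rc sR psdR W WR] \<mu> by simp
  show "pd ((n - 1)\<^sup>2 + 1) W" using psd_left_invertible_imp_pd[OF W sW psdW Rc RW] \<mu> by simp
qed

lemma L0_KKT_lower_bound:
  fixes n :: nat and Rs :: "real mat"
  defines "Ys \<equiv> Vhat n * Rs * transpose_mat (Vhat n)"
  assumes KKT: "KKT n C D F J \<mu> Rs Zs" and Rs: "Rs \<in> SymM ((n - 1)\<^sup>2 + 1)"
    and Zs: "Zs \<in> SymM (n\<^sup>2 + 1)" and \<mu>: "\<mu> > 0"
    and R: "R \<in> SymM ((n - 1)\<^sup>2 + 1)" and pdR: "pd ((n - 1)\<^sup>2 + 1) R"
    and Y: "Y \<in> carrier_mat (n\<^sup>2 + 1) (n\<^sup>2 + 1)"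
  shows "L0 n C D F J \<mu> Rs Ys Zs \<le> L0 n C D F J \<mu> R Y Zs"
proof (cases "gangster J Y = E00 (n\<^sup>2 + 1)")
  case primal: True
  define W where "W = - (transpose_mat (Vhat n) * Zs * Vhat n)"
  have Rc: "R \<in> carrier_mat ((n - 1)\<^sup>2 + 1) ((n - 1)\<^sup>2 + 1)" and sR: "transpose_mat R = R"
    and Rsc: "Rs \<in> carrier_mat ((n - 1)\<^sup>2 + 1) ((n - 1)\<^sup>2 + 1)"
    and Zsc: "Zs \<in> carrier_mat (n\<^sup>2 + 1) (n\<^sup>2 + 1)" and sZs: "transpose_mat Zs = Zs"
    using R Rs Zs unfolding SymM_def by auto
  have W: "W \<in> carrier_mat ((n - 1)\<^sup>2 + 1) ((n - 1)\<^sup>2 + 1)"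
    unfolding W_def using Vhat_carrier[of n] Zsc by simp
  have sW: "transpose_mat W = W"
    unfolding W_def transpose_uminus
    using transpose_congruence_symmetric[OF Zsc sZs Vhat_carrier] by simp
  have Ysc: "Ys \<in> carrier_mat (n\<^sup>2 + 1) (n\<^sup>2 + 1)"
    unfolding Ys_def using Vhat_carrier[of n] Rsc by simp
  from KKT have WRs: "W * Rs = \<mu> \<cdot>\<^sub>m 1\<^sub>m ((n - 1)\<^sup>2 + 1)"
    and primal_s: "gangster J Ys = E00 (n\<^sup>2 + 1)" and dual: "- (LQ n C D F + Zs) \<in> SymJ (n\<^sup>2 + 1) J"
    unfolding KKT_def W_def Ys_def by auto
  have "mtrace (W * Rs) - \<mu> * ln (det Rs) \<le> mtrace (W * R) - \<mu> * ln (det R)"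
    using trace_minus_log_det_minimal[OF W Rc Rsc sW sR _ pdR WRs \<mu>]
      KKT_imp_pd(2)[OF KKT Rs Zs \<mu>] unfolding W_def by blast
  thus ?thesis
    using L0_feasible_eq[OF Zs dual Rsc Ysc primal_s] L0_feasible_eq[OF Zs dual Rc Y primal]
    unfolding W_def by simp
next
  case False
  thus ?thesis unfolding L0_def indI_def by simp
qed

theorem proposition2:
  fixes n :: nat and C D F :: "real mat" and J :: "(nat \<times> nat) set" and \<mu> :: real
    and Rs Zs :: "real mat"
  assumes "n \<ge> 2"
    and "F \<in> SymM n" and "D \<in> SymM n" and "C \<in> carrier_mat n n"
    and "\<mu> > 0"
    and "Rs \<in> SymM ((n-1)^2+1)" and "Zs \<in> SymM (n^2+1)"
    and "KKT n C D F J \<mu> Rs Zs"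
    and "\<forall>R\<in>SymM ((n-1)^2+1). \<forall>Z\<in>SymM (n^2+1).
           KKT n C D F J \<mu> R Z \<longrightarrow> R = Rs \<and> Z = Zs"
  shows "let Ys = Vhat n * Rs * transpose_mat (Vhat n) in
         pd ((n-1)^2+1) Rs
       \<and> (SUP Z\<in>SymM (n^2+1). L0 n C D F J \<mu> Rs Ys Z) = L0 n C D F J \<mu> Rs Ys Zs
       \<and> L0 n C D F J \<mu> Rs Ys Zs
           = (INF RY\<in>{(R, Y). R \<in> SymM ((n-1)^2+1) \<and> pd ((n-1)^2+1) R \<and> Y \<in> SymM (n^2+1)}.
                L0 n C D F J \<mu> (fst RY) (snd RY) Zs)"
proof -
  define Ys where "Ys = Vhat n * Rs * transpose_mat (Vhat n)"
  define S where "S = {(R, Y). R \<in> SymM ((n-1)^2+1) \<and> pd ((n-1)^2+1) R \<and> Y \<in> SymM (n^2+1)}"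
  have Rs: "Rs \<in> carrier_mat ((n-1)^2+1) ((n-1)^2+1)" "transpose_mat Rs = Rs"
    using assms(6) unfolding SymM_def by auto
  have pd: "pd ((n-1)^2+1) Rs" by (rule KKT_imp_pd(1)[OF assms(8,6,7,5)])
  have "transpose_mat Ys = Ys"
    using transpose_congruence_symmetric[OF Rs, of "transpose_mat (Vhat n)"] Vhat_carrier[of n]
    unfolding Ys_def by simp
  hence mem: "(Rs, Ys) \<in> S"
    using assms(6) pd Rs Vhat_carrier[of n] unfolding S_def SymM_def Ys_def by simp
  have "L0 n C D F J \<mu> Rs Ys Zs \<le> (INF RY\<in>S. L0 n C D F J \<mu> (fst RY) (snd RY) Zs)"
    using L0_KKT_lower_bound[OF assms(8,6,7,5), folded Ys_def]
    by (intro INF_greatest) (auto simp: S_def SymM_def)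
  moreover have "(INF RY\<in>S. L0 n C D F J \<mu> (fst RY) (snd RY) Zs) \<le> L0 n C D F J \<mu> Rs Ys Zs"
    using INF_lower[OF mem, of "\<lambda>RY. L0 n C D F J \<mu> (fst RY) (snd RY) Zs"] by simp
  ultimately have inf: "L0 n C D F J \<mu> Rs Ys Zs = (INF RY\<in>S. L0 n C D F J \<mu> (fst RY) (snd RY) Zs)"
    by (rule antisym)
  have sup: "(SUP Z\<in>SymM (n^2+1). L0 n C D F J \<mu> Rs Ys Z) = L0 n C D F J \<mu> Rs Ys Zs"
    by (rule SUP_L0_consistent[OF Ys_def Rs(1) assms(7)])
  show ?thesis unfolding Let_def Ys_def[symmetric] S_def[symmetric] using pd sup inf by simp
qed

end
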